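(* Let $(A_n)$ be a sequence of sets with $A_n\subseteq[n]$ that are quasi-Sidon, i.e. $|A_n+A_n|=(1+o(1))\binom{|A_n|}{2}$ as $n\to\infty$. Then $$|A_n|\le \left(\left(\frac14+\frac{1}{(\pi+2)^2}\right)^{-1/2}+o(1)\right) n^{1/2}=(1.863\ldots+o(1))\, n^{1/2}.$$
   Context: $[n]=\{1,\dots,n\}$. For a set $A$ of integers, $A+A=\{a+b: a,b\in A\}$. *)

theory Defs
  imports Complex_Main "HOL-Library.Landau_Symbols"
begin

definition sumset :: "nat set \<Rightarrow> nat set" where
  "sumset A = {a + b | a b. a \<in> A \<and> b \<in> A}"

end

theory Submission
  imports Defs "HOL-Real_Asymp.Real_Asymp"
begin

(*
  Put W(j) = sum over a in A of e^(pi i j a / n) for 1 <= j < 2n, and let r(s) (sum_rep A s) count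
  the representations s = a + b with a, b in A.  Then W(j)^2 = sum over s of r(s) z^s, where
  z = e^(pi i j / n) is a 2n-th root of unity other than 1.  Split r(s) = (r(s) - 2) + 2: the first
  part has total size at most |A|^2 - 2|A + A| + 2|A|, since r(s) = 1 only for s = 2a, and the
  second part is small because z^2 + ... + z^(2n) = -z.  Hence
  |W(j)|^2 <= 4n + |A|^2 - 4|A + A| + 2|A|, which is about 4n - |A|^2 for quasi-Sidon sets.

  Conversely, n |sin(pi t / n)| = sum over m < n of c_m cos(2 pi m t / n), where c_m is
  sine_kernel n m, c_0 = cot(pi / (2n)) ~ 2n / pi and c_m <= 0 for m >= 1.  Summing over t in A
  gives c_0 |A| <= (n + c_0) max_j |W(j)|, so some |W(j)| is at least (2 / (pi + 2) + o(1)) |A|.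
  Together, (1 + 4 / (pi + 2)^2 - o(1)) |A|^2 <= 4n.
*)

lemma sin_half_times_sum_sin:
  fixes x :: real
  shows "2 * sin (x/2) * (\<Sum>u<N. sin (real u * x)) = cos (x/2) - cos ((2 * real N - 1) * x / 2)"
proof (induction N)
  case (Suc N)
  have "2 * sin (x/2) * sin (real N * x) = cos ((2 * real N - 1) * x / 2) - cos ((2 * real (Suc N) - 1) * x / 2)"
    by (simp add: sin_times_sin algebra_simps add_divide_distrib diff_divide_distrib)
  with Suc show ?case by (simp add: algebra_simps)
qed simp

lemma sin_half_times_sum_cos:
  fixes x :: real
  shows "2 * sin (x/2) * (\<Sum>u<N. cos (real u * x)) = sin ((2 * real N - 1) * x / 2) + sin (x/2)"
proof (induction N)
  case (Suc N)
  have "2 * sin (x/2) * cos (real N * x) = sin ((2 * real (Suc N) - 1) * x / 2) - sin ((2 * real N - 1) * x / 2)"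
    by (simp add: sin_add sin_diff algebra_simps add_divide_distrib diff_divide_distrib)
  with Suc show ?case by (simp add: algebra_simps)
qed simp

lemma sum_cos_multiples_2pi_div:
  fixes d :: int
  assumes n: "n > 0"
  shows "(\<Sum>m<n. cos (2 * pi * real m * of_int d / real n)) = (if int n dvd d then real n else 0)"
proof (cases "int n dvd d")
  case True
  then obtain q where q: "d = int n * q" by (auto simp: dvd_def)
  have "cos (2 * pi * real m * of_int d / real n) = 1" for m
  proof -
    have "2 * pi * real m * of_int d / real n = (2 * pi) * of_int (int m * q)"
      using n by (simp add: q field_simps)
    then show ?thesis by (metis cos_int_2pin)
  qed
  then show ?thesis using True by simp
next
  case False
  let ?x = "2 * pi * of_int d / real n"
  have "(2 * real n - 1) * ?x / 2 = 2 * pi * of_int d - ?x / 2"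
    using n by (simp add: field_simps)
  then have "sin ((2 * real n - 1) * ?x / 2) = - sin (?x / 2)"
    by (simp add: sin_diff)
  with sin_half_times_sum_cos[of ?x n]
  have "sin (?x / 2) * (\<Sum>m<n. cos (real m * ?x)) = 0" by simp
  moreover have "sin (?x / 2) \<noteq> 0"
  proof
    assume "sin (?x / 2) = 0"
    then obtain i :: int where "?x / 2 = of_int i * pi" by (auto simp: sin_zero_iff_int2)
    then have "of_int d = (of_int (int n * i) :: real)" using n by (simp add: field_simps)
    with False show False by (simp only: of_int_eq_iff) simp
  qed
  ultimately show ?thesis using False by (simp add: mult.commute mult.left_commute)
qed

lemma sum_sin_multiples_odd:
  assumes n: "n > 0" and q: "odd q" "q < 2 * n"
  shows "(\<Sum>u<n. sin (real u * (pi * real q / real n))) = cot (pi * real q / (2 * real n))"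
proof -
  let ?x = "pi * real q / real n"
  have "(2 * real n - 1) * ?x / 2 = real q * pi - ?x / 2"
    using n by (simp add: field_simps)
  then have "cos ((2 * real n - 1) * ?x / 2) = - cos (?x / 2)"
    using q by (simp add: cos_diff)
  with sin_half_times_sum_sin[of ?x n]
  have sum: "sin (?x / 2) * (\<Sum>u<n. sin (real u * ?x)) = cos (?x / 2)" by simp
  have "0 < ?x / 2" using n q by (auto simp: odd_pos)
  moreover have "?x / 2 < pi" using n q by (simp add: field_simps)
  ultimately have "sin (?x / 2) > 0" by (intro sin_gt_zero)
  with sum show ?thesis by (simp add: cot_def field_simps)
qed

lemma cot_antimono:
  fixes a b :: real
  assumes "0 < b" "b \<le> a" "a < pi"
  shows "cot a \<le> cot b"
proof -
  have "sin a > 0" "sin b > 0" using assms by (auto intro!: sin_gt_zero)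
  moreover have "sin (a - b) \<ge> 0" using assms by (intro sin_ge_zero) auto
  ultimately show ?thesis by (simp add: cot_def sin_diff divide_simps algebra_simps)
qed

definition sine_kernel :: "nat \<Rightarrow> nat \<Rightarrow> real" where
  "sine_kernel n m = (\<Sum>u<n. sin (pi * real u / real n) * cos (2 * pi * real m * real u / real n))"

lemma sine_kernel_0:
  assumes "n > 0"
  shows "sine_kernel n 0 = cot (pi / (2 * real n))"
  using sum_sin_multiples_odd[of n 1] assms by (simp add: sine_kernel_def mult.commute)

lemma sine_kernel_nonpos:
  assumes n: "n > 0" and m: "1 \<le> m" "m < n"
  shows "sine_kernel n m \<le> 0"
proof -
  let ?s = "\<lambda>q. \<Sum>u<n. sin (real u * (pi * real q / real n))"
  have "sine_kernel n m
      = (\<Sum>u<n. (sin (real u * (pi * real (2*m+1) / real n)) - sin (real u * (pi * real (2*m-1) / real n))) / 2)"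
    unfolding sine_kernel_def
  proof (rule sum.cong [OF refl])
    fix u
    have "pi * real u / real n + 2 * pi * real m * real u / real n = real u * (pi * real (2*m+1) / real n)"
      using n by (simp add: field_simps)
    moreover have "pi * real u / real n - 2 * pi * real m * real u / real n = - (real u * (pi * real (2*m-1) / real n))"
      using n m by (simp add: field_simps of_nat_diff)
    ultimately show "sin (pi * real u / real n) * cos (2 * pi * real m * real u / real n)
        = (sin (real u * (pi * real (2*m+1) / real n)) - sin (real u * (pi * real (2*m-1) / real n))) / 2"
      by (simp add: sin_times_cos)
  qed
  also have "\<dots> = (?s (2*m+1) - ?s (2*m-1)) / 2"
    by (simp only: sum_divide_distrib [symmetric] sum_subtractf)
  also have "\<dots> = (cot (pi * real (2*m+1) / (2 * real n)) - cot (pi * real (2*m-1) / (2 * real n))) / 2"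
    using m sum_sin_multiples_odd [OF n, of "2*m+1"] sum_sin_multiples_odd [OF n, of "2*m-1"] by simp
  also have "\<dots> \<le> 0"
  proof -
    have "pi * real (2*m+1) < pi * (2 * real n)" using m by simp
    then have "cot (pi * real (2*m+1) / (2 * real n)) \<le> cot (pi * real (2*m-1) / (2 * real n))"
      using n m by (intro cot_antimono divide_right_mono) (auto simp: field_simps)
    then show ?thesis by simp
  qed
  finally show ?thesis .
qed

lemma sum_cos_times_cos_multiples_2pi_div:
  fixes u t :: int
  assumes n: "n > 0"
  shows "(\<Sum>m<n. cos (2 * pi * real m * of_int u / real n) * cos (2 * pi * real m * of_int t / real n))
       = real n / 2 * ((if int n dvd (u - t) then 1 else 0) + (if int n dvd (u + t) then 1 else 0))"
proof -
  let ?c = "\<lambda>d m. cos (2 * pi * real m * of_int d / real n)"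
  have "(\<Sum>m<n. ?c u m * ?c t m) = (\<Sum>m<n. (?c (u - t) m + ?c (u + t) m) / 2)"
  proof (rule sum.cong [OF refl])
    fix m
    have "2 * pi * real m * of_int u / real n - 2 * pi * real m * of_int t / real n
        = 2 * pi * real m * of_int (u - t) / real n"
      "2 * pi * real m * of_int u / real n + 2 * pi * real m * of_int t / real n
        = 2 * pi * real m * of_int (u + t) / real n"
      by (simp_all add: algebra_simps add_divide_distrib diff_divide_distrib)
    then show "?c u m * ?c t m = (?c (u - t) m + ?c (u + t) m) / 2"
      by (simp only: cos_times_cos)
  qed
  also have "\<dots> = ((\<Sum>m<n. ?c (u - t) m) + (\<Sum>m<n. ?c (u + t) m)) / 2"
    by (simp only: sum_divide_distrib [symmetric] sum.distrib)
  also have "\<dots> = real n / 2 * ((if int n dvd (u - t) then 1 else 0) + (if int n dvd (u + t) then 1 else 0))"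
    by (simp only: sum_cos_multiples_2pi_div [OF n]) auto
  finally show ?thesis .
qed

lemma sum_lessThan_dvd_indicator:
  fixes t :: int and f :: "nat \<Rightarrow> real"
  assumes n: "n > 0"
  shows "(\<Sum>u<n. f u * (if int n dvd (int u - t) then 1 else 0)) = f (nat (t mod int n))"
proof -
  have "int n dvd (int u - t) \<longleftrightarrow> u = nat (t mod int n)" if "u < n" for u
    using that by (auto simp: mod_eq_dvd_iff [symmetric])
  moreover have "nat (t mod int n) < n" using n by (simp add: nat_less_iff)
  ultimately show ?thesis
    by (simp add: if_distrib cong: if_cong)
qed

lemma sin_pi_mod_eq_abs_sin:
  fixes t :: int
  assumes n: "n > 0"
  shows "sin (pi * real (nat (t mod int n)) / real n) = \<bar>sin (pi * of_int t / real n)\<bar>"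
proof -
  define q r where "q = t div int n" and "r = t mod int n"
  have r: "0 \<le> r" "r < int n" using n by (auto simp: r_def)
  have "t = int n * q + r" by (simp add: q_def r_def)
  then have "pi * of_int t / real n = pi * of_int q + pi * of_int r / real n"
    using n by (simp add: field_simps)
  then have "\<bar>sin (pi * of_int t / real n)\<bar> = \<bar>sin (pi * of_int r / real n)\<bar>"
    by (simp add: sin_add abs_mult)
  also have "\<dots> = sin (pi * of_int r / real n)"
    using n r by (intro abs_of_nonneg sin_ge_zero) (auto simp: field_simps)
  finally show ?thesis using r by (simp add: r_def)
qed

lemma sine_kernel_inversion:
  fixes t :: int
  assumes n: "n > 0"
  shows "(\<Sum>m<n. sine_kernel n m * cos (2 * pi * real m * of_int t / real n))
       = real n * \<bar>sin (pi * of_int t / real n)\<bar>"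
proof -
  let ?s = "\<lambda>u. sin (pi * real u / real n)"
  let ?\<delta> = "\<lambda>d. if int n dvd d then 1 else 0 :: real"
  have "(\<Sum>m<n. sine_kernel n m * cos (2 * pi * real m * of_int t / real n))
      = (\<Sum>u<n. ?s u *
           (\<Sum>m<n. cos (2 * pi * real m * of_int (int u) / real n) * cos (2 * pi * real m * of_int t / real n)))"
    unfolding sine_kernel_def sum_distrib_left sum_distrib_right
    by (subst sum.swap) (simp add: mult.assoc)
  also have "\<dots> = (\<Sum>u<n. ?s u * (real n / 2 * (?\<delta> (int u - t) + ?\<delta> (int u - (- t)))))"
    by (simp only: sum_cos_times_cos_multiples_2pi_div [OF n] diff_minus_eq_add)
  also have "\<dots> = real n / 2 * ((\<Sum>u<n. ?s u * ?\<delta> (int u - t)) + (\<Sum>u<n. ?s u * ?\<delta> (int u - (- t))))"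
    by (simp only: distrib_left sum.distrib sum_distrib_left mult.left_commute)
  also have "\<dots> = real n / 2 * (?s (nat (t mod int n)) + ?s (nat ((- t) mod int n)))"
    by (simp only: sum_lessThan_dvd_indicator [OF n])
  also have "\<dots> = real n * \<bar>sin (pi * of_int t / real n)\<bar>"
    using sin_pi_mod_eq_abs_sin [OF n, of t] sin_pi_mod_eq_abs_sin [OF n, of "- t"] by simp
  finally show ?thesis .
qed

lemma cot_mult_card_le_of_trig_sums:
  fixes A :: "nat set" and R :: real
  assumes n: "n > 0" and A: "A \<subseteq> {1..n}"
    and sin_le: "(\<Sum>a\<in>A. sin (pi * real a / real n)) \<le> R"
    and cos_le: "\<And>m. 1 \<le> m \<Longrightarrow> m < n \<Longrightarrow> (\<Sum>a\<in>A. cos (2 * pi * real m * real a / real n)) \<le> R"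
  shows "cot (pi / (2 * real n)) * real (card A) \<le> R * (real n + cot (pi / (2 * real n)))"
proof -
  let ?c = "sine_kernel n"
  let ?C = "\<lambda>m. \<Sum>a\<in>A. cos (2 * pi * real m * real a / real n)"
  have inversion: "(\<Sum>m<n. ?c m * cos (2 * pi * real m * real a / real n)) = real n * sin (pi * real a / real n)"
    if "a \<in> A" for a
  proof -
    have "sin (pi * real a / real n) \<ge> 0"
      using that A n by (intro sin_ge_zero) (auto simp: field_simps)
    then show ?thesis using sine_kernel_inversion [OF n, of "int a"] by simp
  qed
  have split: "(\<Sum>m<n. f m) = f 0 + (\<Sum>m=1..<n. f m)" for f :: "nat \<Rightarrow> real"
    using n by (simp add: atLeast0LessThan [symmetric] sum.atLeast_Suc_lessThan)
  have kernel_tail: "(\<Sum>m=1..<n. ?c m) = - ?c 0"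
    using sine_kernel_inversion [OF n, of 0] by (simp add: split add_eq_0_iff)
  have "?c 0 * real (card A) - ?c 0 * R = ?c 0 * real (card A) + (\<Sum>m=1..<n. ?c m * R)"
    unfolding sum_distrib_right [symmetric] kernel_tail by simp
  also have "\<dots> \<le> ?c 0 * real (card A) + (\<Sum>m=1..<n. ?c m * ?C m)"
    using cos_le sine_kernel_nonpos [OF n] by (intro add_left_mono sum_mono mult_left_mono_neg) auto
  also have "\<dots> = (\<Sum>m<n. ?c m * ?C m)"
    by (simp add: split)
  also have "\<dots> = real n * (\<Sum>a\<in>A. sin (pi * real a / real n))"
    by (simp add: sum_distrib_left inversion sum.swap [of _ A] cong: sum.cong)
  also have "\<dots> \<le> real n * R"
    using sin_le by (simp add: mult_left_mono)
  finally show ?thesis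
    using sine_kernel_0 [OF n] by (simp add: algebra_simps)
qed

lemma cot_mult_card_le:
  fixes A :: "nat set" and R :: real
  assumes n: "n > 0" and A: "A \<subseteq> {1..n}"
    and bound: "\<And>j. 1 \<le> j \<Longrightarrow> j < 2*n \<Longrightarrow> cmod (\<Sum>a\<in>A. cis (pi * real j / real n) ^ a) \<le> R"
  shows "cot (pi / (2 * real n)) * real (card A) \<le> R * (real n + cot (pi / (2 * real n)))"
proof (rule cot_mult_card_le_of_trig_sums [OF n A])
  have "(\<Sum>a\<in>A. sin (pi * real a / real n)) = Im (\<Sum>a\<in>A. cis (pi * real 1 / real n) ^ a)"
    by (simp add: Im_sum DeMoivre mult.commute)
  also have "\<dots> \<le> cmod (\<Sum>a\<in>A. cis (pi * real 1 / real n) ^ a)"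
    by (rule order_trans [OF abs_ge_self abs_Im_le_cmod])
  also have "\<dots> \<le> R"
    using n by (intro bound) auto
  finally show "(\<Sum>a\<in>A. sin (pi * real a / real n)) \<le> R" .
next
  fix m assume m: "1 \<le> m" "m < n"
  have "(\<Sum>a\<in>A. cos (2 * pi * real m * real a / real n)) = Re (\<Sum>a\<in>A. cis (pi * real (2*m) / real n) ^ a)"
    by (simp add: Re_sum DeMoivre mult_ac)
  also have "\<dots> \<le> R"
    using m by (intro order_trans [OF complex_Re_le_cmod bound]) auto
  finally show "(\<Sum>a\<in>A. cos (2 * pi * real m * real a / real n)) \<le> R" .
qed

definition sum_rep :: "nat set \<Rightarrow> nat \<Rightarrow> nat" where
  "sum_rep A s = card {p \<in> A \<times> A. fst p + snd p = s}"

lemma sumset_eq_image: "sumset A = (\<lambda>p. fst p + snd p) ` (A \<times> A)"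
  unfolding sumset_def by force

lemma finite_sumset: "finite A \<Longrightarrow> finite (sumset A)"
  by (simp add: sumset_eq_image)

lemma sumset_subset_atLeastAtMost:
  assumes "A \<subseteq> {1..n}"
  shows "sumset A \<subseteq> {2..2*n}"
proof
  fix s assume "s \<in> sumset A"
  then obtain a b where "a \<in> {1..n}" "b \<in> {1..n}" "s = a + b"
    using assms unfolding sumset_def by blast
  then show "s \<in> {2..2*n}" by simp
qed

lemma sum_power_square_eq_sum_rep:
  fixes z :: "'a::comm_semiring_1"
  assumes "finite A"
  shows "(\<Sum>a\<in>A. z ^ a)^2 = (\<Sum>s\<in>sumset A. of_nat (sum_rep A s) * z ^ s)"
proof -
  have "(\<Sum>a\<in>A. z ^ a)^2 = (\<Sum>p\<in>A \<times> A. z ^ (fst p + snd p))"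
    by (simp add: power2_eq_square sum_product sum.cartesian_product power_add case_prod_beta)
  also have "\<dots> = (\<Sum>s\<in>sumset A. \<Sum>p\<in>{p \<in> A \<times> A. fst p + snd p = s}. z ^ (fst p + snd p))"
    unfolding sumset_eq_image using assms by (intro sum.image_gen) simp
  also have "\<dots> = (\<Sum>s\<in>sumset A. of_nat (sum_rep A s) * z ^ s)"
    by (simp add: sum_rep_def)
  finally show ?thesis .
qed

lemma sum_sum_rep: "finite A \<Longrightarrow> (\<Sum>s\<in>sumset A. sum_rep A s) = card A ^ 2"
  using sum_power_square_eq_sum_rep [of A "1 :: nat"] by simp

lemma sum_rep_pos:
  assumes "finite A" "s \<in> sumset A"
  shows "sum_rep A s > 0"
proof -
  from assms(2) obtain a b where "a \<in> A" "b \<in> A" "s = a + b" unfolding sumset_def by auto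
  then have "(a, b) \<in> {p \<in> A \<times> A. fst p + snd p = s}" by simp
  with assms(1) show ?thesis unfolding sum_rep_def by (auto simp: card_gt_0_iff)
qed

lemma sum_rep_eq_1_imp_double:
  assumes "sum_rep A s = 1"
  shows "s \<in> (\<lambda>a. 2 * a) ` A"
proof -
  let ?R = "{p \<in> A \<times> A. fst p + snd p = s}"
  from assms obtain p where p: "?R = {p}"
    unfolding sum_rep_def by (rule card_1_singletonE)
  obtain a b where ab: "p = (a, b)" by (cases p)
  have "p \<in> ?R" by (simp only: p) simp
  then have "a \<in> A" "b \<in> A" "a + b = s" by (auto simp: ab)
  then have "(b, a) \<in> ?R" by simp
  then have "(b, a) = p" by (simp only: p singleton_iff)
  with ab have "a = b" by (metis prod.inject)
  with \<open>a + b = s\<close> have "s = 2 * a" by simp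
  with \<open>a \<in> A\<close> show ?thesis by blast
qed

lemma sum_abs_sum_rep_minus_2_le:
  assumes A: "finite A"
  shows "(\<Sum>s\<in>sumset A. \<bar>real (sum_rep A s) - 2\<bar>)
       \<le> real (card A)^2 - 2 * real (card (sumset A)) + 2 * real (card A)"
proof -
  let ?S = "sumset A" and ?D = "(\<lambda>a. 2 * a) ` A"
  have "\<bar>real (sum_rep A s) - 2\<bar> \<le> real (sum_rep A s) - 2 + 2 * (if s \<in> ?D then 1 else 0)"
    if "s \<in> ?S" for s
    using sum_rep_pos [OF A that] sum_rep_eq_1_imp_double [of A s]
    by (cases "sum_rep A s = 1") auto
  then have "(\<Sum>s\<in>?S. \<bar>real (sum_rep A s) - 2\<bar>)
      \<le> (\<Sum>s\<in>?S. real (sum_rep A s) - 2 + 2 * (if s \<in> ?D then 1 else 0))"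
    by (rule sum_mono)
  also have "\<dots> = (\<Sum>s\<in>?S. real (sum_rep A s)) - 2 * real (card ?S) + 2 * real (card (?S \<inter> ?D))"
    using finite_sumset [OF A]
    by (simp add: sum.distrib sum_subtractf sum_distrib_left [symmetric] sum.If_cases Int_commute)
  also have "(\<Sum>s\<in>?S. real (sum_rep A s)) = real (card A)^2"
    using sum_sum_rep [OF A] by (metis of_nat_power of_nat_sum)
  also have "card (?S \<inter> ?D) \<le> card A"
    using A card_image_le [of A "\<lambda>a. 2 * a"] card_mono [of ?D "?S \<inter> ?D"] by auto
  finally show ?thesis by simp
qed

lemma sum_power_root_unity:
  fixes z :: "'a::field"
  assumes "z ^ m = 1" "z \<noteq> 1"
  shows "(\<Sum>s=1..m. z ^ s) = 0"
  using assms by (simp add: sum_gp)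

lemma norm_sum_power_root_unity_le:
  fixes z :: complex
  assumes m: "m > 0" and z: "z ^ m = 1" "z \<noteq> 1" and S: "S \<subseteq> {2..m}"
  shows "cmod (\<Sum>s\<in>S. z ^ s) \<le> real m - real (card S)"
proof -
  have norm_z: "cmod z = 1" using power_eq_1_iff [OF z(1)] m by simp
  have "(\<Sum>s=1..m. z ^ s) = z + (\<Sum>s=2..m. z ^ s)"
    using m by (simp add: sum.atLeast_Suc_atMost numeral_2_eq_2)
  then have "(\<Sum>s=2..m. z ^ s) = - z"
    using sum_power_root_unity [OF z] by (simp add: add_eq_0_iff)
  then have "(\<Sum>s\<in>S. z ^ s) = - z - (\<Sum>s\<in>{2..m} - S. z ^ s)"
    using S by (simp add: sum_diff)
  then have "cmod (\<Sum>s\<in>S. z ^ s) \<le> cmod z + (\<Sum>s\<in>{2..m} - S. cmod (z ^ s))"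
    by (metis norm_minus_cancel norm_sum norm_triangle_ineq4 add_left_mono order_trans)
  also have "\<dots> = 1 + real (card ({2..m} - S))"
    by (simp add: norm_z norm_power)
  also have "card ({2..m} - S) = m - 1 - card S"
    using S by (simp add: card_Diff_subset finite_subset)
  also have "real (m - 1 - card S) = real m - 1 - real (card S)"
    using card_mono [OF _ S] m by (simp add: of_nat_diff)
  finally show ?thesis by simp
qed

lemma norm_sum_power_square_le_sumset:
  fixes z :: complex
  assumes A: "A \<subseteq> {1..n}" and n: "n > 0" and z: "z ^ (2*n) = 1" "z \<noteq> 1"
  shows "cmod (\<Sum>a\<in>A. z ^ a) ^ 2
       \<le> 4 * real n + real (card A)^2 - 4 * real (card (sumset A)) + 2 * real (card A)"
proof -
  have fin: "finite A" using A finite_subset by blast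
  let ?S = "sumset A" and ?r = "sum_rep A"
  have norm_z: "cmod z = 1" using power_eq_1_iff [OF z(1)] n by simp
  let ?X = "\<Sum>s\<in>?S. of_real (real (?r s) - 2) * z ^ s" and ?Y = "\<Sum>s\<in>?S. z ^ s"
  have "(\<Sum>a\<in>A. z ^ a) ^ 2 = ?X + 2 * ?Y"
    by (simp add: sum_power_square_eq_sum_rep [OF fin] algebra_simps sum.distrib sum_subtractf sum_distrib_left)
  then have "cmod (\<Sum>a\<in>A. z ^ a) ^ 2 \<le> cmod ?X + 2 * cmod ?Y"
    using norm_triangle_ineq [of ?X "2 * ?Y"] by (simp add: norm_mult flip: norm_power)
  moreover have "cmod ?X \<le> (\<Sum>s\<in>?S. \<bar>real (?r s) - 2\<bar>)"
    by (rule order_trans [OF norm_sum]) (simp only: norm_mult norm_power norm_z norm_of_real, simp)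
  moreover have "cmod ?Y \<le> 2 * real n - real (card ?S)"
    using norm_sum_power_root_unity_le [of "2*n" z ?S] n z sumset_subset_atLeastAtMost [OF A] by simp
  ultimately show ?thesis
    using sum_abs_sum_rep_minus_2_le [OF fin] by linarith
qed

lemma cis_2pi_div_ne_1:
  assumes "0 < j" "j < m"
  shows "cis (2 * pi * real j / real m) \<noteq> 1"
  using inj_onD [OF bij_betw_imp_inj_on [OF bij_betw_roots_unity], of m j 0] assms by auto

definition kernel_ratio :: "nat \<Rightarrow> real" where
  "kernel_ratio n = cot (pi / (2 * real n)) / (real n + cot (pi / (2 * real n)))"

lemma kernel_ratio_sq_mult_card_le:
  assumes n: "n > 0" and A: "A \<subseteq> {1..n}"
  shows "kernel_ratio n ^ 2 * real (card A)^2
       \<le> 4 * real n + real (card A)^2 - 4 * real (card (sumset A)) + 2 * real (card A)"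
    (is "_ \<le> ?Q")
proof -
  let ?\<kappa> = "cot (pi / (2 * real n))"
  have bound: "cmod (\<Sum>a\<in>A. cis (pi * real j / real n) ^ a) ^ 2 \<le> ?Q" if "1 \<le> j" "j < 2*n" for j
  proof (rule norm_sum_power_square_le_sumset [OF A n])
    have "cis (pi * real j / real n) = cis (2 * pi * real j / real (2*n))" by simp
    also have "\<dots> \<noteq> 1" using that by (intro cis_2pi_div_ne_1) auto
    finally show "cis (pi * real j / real n) \<noteq> 1" .
    have "cis (pi * real j / real n) ^ (2*n) = cis (2 * pi * real j)"
      using n by (simp add: DeMoivre field_simps)
    then show "cis (pi * real j / real n) ^ (2*n) = 1" by (simp add: cis_multiple_2pi)
  qed
  have "0 < pi / (2 * real n)" "pi / (2 * real n) \<le> pi / 2"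
    using n by (simp_all add: field_simps)
  then have \<kappa>: "?\<kappa> \<ge> 0"
    unfolding cot_def by (intro divide_nonneg_nonneg cos_ge_zero sin_ge_zero) auto
  have "cmod (\<Sum>a\<in>A. cis (pi * real 1 / real n) ^ a) ^ 2 \<le> ?Q"
    using n by (intro bound) auto
  then have Q: "?Q \<ge> 0" by (rule order_trans [OF zero_le_power2])
  have "?\<kappa> * real (card A) \<le> sqrt ?Q * (real n + ?\<kappa>)"
    by (intro cot_mult_card_le [OF n A] real_le_rsqrt bound)
  moreover have "real n + ?\<kappa> > 0" using n \<kappa> by simp
  ultimately have "kernel_ratio n * real (card A) \<le> sqrt ?Q"
    by (simp add: kernel_ratio_def pos_divide_le_eq)
  then have "(kernel_ratio n * real (card A))^2 \<le> (sqrt ?Q)^2"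
    using n \<kappa> by (intro power_mono) (auto simp: kernel_ratio_def)
  also have "(sqrt ?Q)^2 = ?Q" using Q by simp
  finally show ?thesis by (simp only: power_mult_distrib)
qed

lemma tendsto_kernel_ratio: "(kernel_ratio \<longlongrightarrow> 2 / (pi + 2)) at_top"
proof -
  let ?\<gamma> = "\<lambda>n. cot (pi / (2 * real n)) / real n"
  have \<gamma>: "(?\<gamma> \<longlongrightarrow> 2 / pi) at_top"
    unfolding cot_def by real_asymp
  have "1 + 2 / pi \<noteq> (0 :: real)"
    using pi_gt_zero by (metis add_pos_pos divide_pos_pos zero_less_numeral zero_less_one less_irrefl)
  from tendsto_divide [OF \<gamma> tendsto_add [OF tendsto_const \<gamma>] this]
  have "((\<lambda>n. ?\<gamma> n / (1 + ?\<gamma> n)) \<longlongrightarrow> (2 / pi) / (1 + 2 / pi)) at_top" .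
  also have "(2 / pi) / (1 + 2 / pi) = 2 / (pi + 2)"
    by (simp add: field_simps)
  finally show ?thesis
    by (rule Lim_transform_eventually)
      (use eventually_gt_at_top [of 0] in \<open>eventually_elim, simp add: kernel_ratio_def field_simps\<close>)
qed

lemma quadratic_inequality_imp_le:
  fixes a b c x :: real
  assumes c: "c > 0" and ab: "a \<ge> 0" "b \<ge> 0" and x: "c * x^2 \<le> a + b * x"
  shows "x \<le> sqrt (a / c) + b / c"
proof (cases "x \<le> b / c")
  case False
  then have "(x - b / c)^2 \<le> (x - b / c) * x"
    unfolding power2_eq_square using ab c by (intro mult_left_mono) auto
  also have "\<dots> = (c * x^2 - b * x) / c"
    using c by (simp add: field_simps power2_eq_square)
  also have "\<dots> \<le> a / c"
    using c x by (intro divide_right_mono) auto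
  finally have "x - b / c \<le> sqrt (a / c)" by (rule real_le_rsqrt)
  then show ?thesis by simp
next
  case True
  moreover have "sqrt (a / c) \<ge> 0" using ab c by simp
  ultimately show ?thesis by linarith
qed

lemma real_choose_two: "2 * real (k choose 2) = real k * (real k - 1)"
  by (induction k) (auto simp: numeral_2_eq_2 algebra_simps)

lemma card_square_le_of_sumset_lower_bound:
  fixes A :: "nat set" and r d :: real
  assumes n: "n > 0" and A: "A \<subseteq> {1..n}" and d: "d \<ge> 0"
    and ratio: "kernel_ratio n ^ 2 \<ge> r - d"
    and sumset: "real (card (sumset A)) \<ge> (1 - d / 2) * real (card A choose 2)"
  shows "(1 + r - 2 * d) * real (card A)^2 \<le> 4 * real n + 4 * real (card A)"
proof -
  let ?k = "real (card A)" and ?s = "real (card (sumset A))" and ?C = "real (card A choose 2)"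
  have "(r - d) * ?k^2 \<le> kernel_ratio n ^ 2 * ?k^2"
    using ratio by (rule mult_right_mono) simp
  also have "\<dots> \<le> 4 * real n + ?k^2 - 4 * ?s + 2 * ?k"
    by (rule kernel_ratio_sq_mult_card_le [OF n A])
  finally have "(r - d) * ?k^2 \<le> 4 * real n + ?k^2 - 4 * ?s + 2 * ?k" .
  moreover have "(2 - d) * (?k^2 - ?k) \<le> 4 * ?s"
  proof -
    have "(2 - d) * (?k^2 - ?k) = (2 - d) * (2 * ?C)"
      unfolding real_choose_two by (simp add: power2_eq_square algebra_simps)
    also have "\<dots> = 4 * ((1 - d / 2) * ?C)"
      by (simp add: algebra_simps)
    also have "\<dots> \<le> 4 * ?s" using sumset by simp
    finally show ?thesis .
  qed
  moreover have "d * ?k \<ge> 0" using d by simp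
  ultimately show ?thesis by (simp add: algebra_simps)
qed

lemma asymp_equiv_eventually_ge:
  fixes f g :: "'a \<Rightarrow> real"
  assumes "f \<sim>[F] g" "\<delta> > 0" "\<And>x. g x \<ge> 0"
  shows "eventually (\<lambda>x. f x \<ge> (1 - \<delta>) * g x) F"
  using landau_o.smallD [OF assms(1) [unfolded asymp_equiv_altdef] assms(2)]
  by eventually_elim (use assms(3) in \<open>auto simp: algebra_simps abs_le_iff\<close>)

lemma quasi_sidon_eventually_card_le:
  fixes A :: "nat \<Rightarrow> nat set" and c :: real
  assumes sub: "\<And>n. A n \<subseteq> {1..n}"
    and quasi_sidon: "(\<lambda>n. real (card (sumset (A n)))) \<sim>[at_top] (\<lambda>n. real (card (A n) choose 2))"
    and c: "0 < c" "c < 1 + (2 / (pi + 2))^2"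
  shows "eventually (\<lambda>n. real (card (A n)) \<le> sqrt (4 * real n / c) + 4 / c) at_top"
proof -
  define r where "r = (2 / (pi + 2))^2"
  define d where "d = (1 + r - c) / 2"
  have "c < 1 + r" using c(2) by (simp only: r_def)
  then have d: "d > 0" by (simp add: d_def)
  have c_eq: "c = 1 + r - 2 * d" unfolding d_def by argo
  have "((\<lambda>n. kernel_ratio n ^ 2) \<longlongrightarrow> r) at_top"
    unfolding r_def by (intro tendsto_power tendsto_kernel_ratio)
  from order_tendstoD(1) [OF this, of "r - d"] d
  have ratio: "eventually (\<lambda>n. kernel_ratio n ^ 2 \<ge> r - d) at_top"
    by (auto elim: eventually_mono)
  have sumset: "eventually (\<lambda>n. real (card (sumset (A n))) \<ge> (1 - d / 2) * real (card (A n) choose 2)) at_top"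
    using d by (intro asymp_equiv_eventually_ge [OF quasi_sidon]) auto
  show ?thesis
    using ratio sumset eventually_gt_at_top [of 0]
  proof eventually_elim
    case (elim n)
    have "c * real (card (A n))^2 \<le> 4 * real n + 4 * real (card (A n))"
      unfolding c_eq
      by (rule card_square_le_of_sumset_lower_bound [OF elim(3) sub less_imp_le [OF d] elim(1) elim(2)])
    then show ?case
      using c by (intro quadratic_inequality_imp_le) auto
  qed
qed

lemma quasi_sidon_eventually_card_le_sqrt:
  fixes A :: "nat \<Rightarrow> nat set" and D :: real
  assumes sub: "\<And>n. A n \<subseteq> {1..n}"
    and quasi_sidon: "(\<lambda>n. real (card (sumset (A n)))) \<sim>[at_top] (\<lambda>n. real (card (A n) choose 2))"
    and D: "D > 2 / sqrt (1 + (2 / (pi + 2))^2)"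
  shows "eventually (\<lambda>n. real (card (A n)) \<le> D * sqrt (real n) + D^2) at_top"
proof -
  define L where "L = 1 + (2 / (pi + 2))^2"
  have L: "L > 0" by (simp add: L_def add_pos_nonneg)
  then have "0 < 2 / sqrt L" by simp
  then have D0: "D > 0" using D unfolding L_def by linarith
  have "(2 / sqrt L)^2 < D^2"
    using D \<open>0 < 2 / sqrt L\<close> by (intro power_strict_mono) (auto simp: L_def)
  then have c: "0 < 4 / D^2" "4 / D^2 < L"
    using L D0 by (auto simp: field_simps power_divide)
  from quasi_sidon_eventually_card_le [OF sub quasi_sidon c [unfolded L_def]]
  show ?thesis
    by (rule eventually_mono) (use D0 in \<open>simp add: real_sqrt_mult mult.commute\<close>)
qed

lemma quasi_sidon_constant_eq:
  "(1/4 + 1/(pi + 2)^2) powr (-1/2) = 2 / sqrt (1 + (2 / (pi + 2))^2)"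
proof -
  have "1/4 + 1/(pi + 2)^2 = (1 + (2 / (pi + 2))^2) / 4"
    by (simp add: power_divide add_divide_distrib)
  then show ?thesis
    by (simp only:) (simp add: powr_minus powr_half_sqrt real_sqrt_divide add_pos_nonneg)
qed

theorem theorem3:
  fixes A :: "nat \<Rightarrow> nat set"
  assumes sub: "\<And>n. A n \<subseteq> {1..n}"
    and quasi_sidon: "(\<lambda>n. real (card (sumset (A n)))) \<sim>[at_top] (\<lambda>n. real (card (A n) choose 2))"
  shows "\<forall>\<epsilon>>0. eventually (\<lambda>n. real (card (A n)) \<le>
            ((1/4 + 1/(pi + 2)^2) powr (-1/2) + \<epsilon>) * sqrt (real n)) at_top"
proof (intro allI impI)
  fix \<epsilon> :: real assume \<epsilon>: "\<epsilon> > 0"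
  define C where "C = (1/4 + 1/(pi + 2)^2) powr (-1/2)"
  have "C = 2 / sqrt (1 + (2 / (pi + 2))^2)"
    unfolding C_def by (rule quasi_sidon_constant_eq)
  with \<epsilon> have "eventually (\<lambda>n. real (card (A n)) \<le> (C + \<epsilon>/2) * sqrt (real n) + (C + \<epsilon>/2)^2) at_top"
    by (intro quasi_sidon_eventually_card_le_sqrt [OF sub quasi_sidon]) simp
  moreover have "eventually (\<lambda>n. 2 * (C + \<epsilon>/2)^2 / \<epsilon> \<le> sqrt (real n)) at_top"
    using filterlim_compose [OF sqrt_at_top filterlim_real_sequentially] by (simp add: filterlim_at_top)
  ultimately have "eventually (\<lambda>n. real (card (A n)) \<le> (C + \<epsilon>) * sqrt (real n)) at_top"
  proof eventually_elim
    case (elim n)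
    then have "(C + \<epsilon>/2)^2 \<le> \<epsilon>/2 * sqrt (real n)"
      using \<epsilon> by (simp add: field_simps)
    moreover have "(C + \<epsilon>/2) * sqrt (real n) + \<epsilon>/2 * sqrt (real n) = (C + \<epsilon>) * sqrt (real n)"
      by (simp add: algebra_simps)
    ultimately show ?case using elim(1) by linarith
  qed
  then show "eventually (\<lambda>n. real (card (A n)) \<le>
      ((1/4 + 1/(pi + 2)^2) powr (-1/2) + \<epsilon>) * sqrt (real n)) at_top"
    by (simp only: C_def)
qed

end
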